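(* Let $\bar\delta\ge1$ be an integer and $\pi$ the switching policy $(\bar\delta,0)$ (transmit in $(1,1,0)$, in every state $(0,1,\delta)$, $\delta\ge1$, and in $(1,0,\delta)$ for $\delta\ge\bar\delta$). Define $A=\frac{p\bar q^{\bar\delta-1}}{1-\bar qp_f}$, $a_1=\frac{p(1-\bar q^{\bar\delta-1})}{1-\bar q}+A$, $b_1=\frac{qp_f}{1-\bar pp_f}$, $B=\frac{q}{\bar p(1-\bar pp_f)}$, $D=(1+a_1)\bar pB+(1+b_1)\bar qA$. Then the stationary distribution of $\{S_t\}$ under $\pi$ is $\nu_{0,0,0}=\bar pB/D$, $\nu_{1,1,0}=\bar qA/D$, $\nu_{1,0,k}=p\bar q^{k-1}\nu_{0,0,0}$ for $1\le k\le\bar\delta$ and $\nu_{1,0,k}=p\bar q^{\bar\delta-1}(\bar qp_f)^{k-\bar\delta}\nu_{0,0,0}$ for $k>\bar\delta$, $\nu_{0,1,k}=qp_f(\bar pp_f)^{k-1}\nu_{1,1,0}$ for $k\ge1$. Moreover, $$\mathcal L(\pi)=\beta p\,\psi(\bar q,\bar\delta)\,\nu_{0,0,0}+\frac{(1-\beta)qp_f\nu_{1,1,0}}{(1-\bar pp_f)^2}+\lambda\big(A\nu_{0,0,0}+(1+b_1)\nu_{1,1,0}\big),$$ where $\psi(x,y)=\frac{1-(x+(1-x)y)x^{y-1}}{(1-x)^2}+\frac{(xp_f+(1-xp_f)y)x^{y-1}}{(1-xp_f)^2}$.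
   Context: Fix $p,q\in(0,1)$, $\bar p=1-p$, $\bar q=1-q$. The source $\{X_t\}$ is a Markov chain on $\{0,1\}$ with $\Pr[X_{t+1}=1\mid X_t=0]=p$, $\Pr[X_{t+1}=0\mid X_t=1]=q$; channel i.i.d. Bernoulli with success probability $p_s\in(0,1]$, independent of the source, $p_f=1-p_s$. Estimate dynamics: if $A_t=1$ and the transmission succeeds then $\hat X_{t+1}=X_{t+1}$, otherwise $\hat X_{t+1}=\hat X_t$. Age: $\Delta_{t+1}=\Delta_t+1$ if $X_{t+1}\ne\hat X_{t+1}$, else $0$. State $S_t=(X_t,\hat X_t,\Delta_t)\in\mathcal S=\{(0,0,0),(1,1,0)\}\cup\{(1,0,\delta),(0,1,\delta):\delta\ge1\}$, $S_1=(0,0,0)$; $\nu_{i,j,\delta}$ is the stationary probability of $(i,j,\delta)$. Per-state cost $c(s)=\beta\delta$ for $s=(1,0,\delta)$, $(1-\beta)\delta$ for $s=(0,1,\delta)$, $0$ for synced states, $\beta\in[0,1]$; per-stage cost $\ell(s,a)=\mathbb E[c(S_{t+1})\mid S_t=s,A_t=a]+\lambda\mathbb 1\{a=1\}$, $\lambda\ge0$; average cost $\mathcal L(\pi)=\limsup_{T\to\infty}\frac1T\sum_{t=1}^T\mathbb E^\pi[\ell(S_t,A_t)\mid S_1=(0,0,0)]$. The switching policy $(\bar\delta,\underline\delta)$ ($\bar\delta,\underline\delta\ge0$ integers) transmits iff $S_t=(1,0,\delta)$ with $\delta\ge\bar\delta$, or $S_t=(0,1,\delta)$ with $\delta\ge\underline\delta$,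 or ($\bar\delta=0$ and $S_t=(0,0,0)$), or ($\underline\delta=0$ and $S_t=(1,1,0)$). *)

theory Defs
  imports "HOL-Probability.Probability"
begin

text \<open>States are triples (x, xhat, delta) with x, xhat in {0,1} encoded as naturals.\<close>
type_synonym st = "nat \<times> nat \<times> nat"

definition state_space :: "st set" where
  "state_space = {(0,0,0), (1,1,0)} \<union> {(1,0,d) | d. d \<ge> 1} \<union> {(0,1,d) | d. d \<ge> 1}"

definition src_step :: "real \<Rightarrow> real \<Rightarrow> nat \<Rightarrow> nat pmf" where
  "src_step p q x = (if x = 0
      then map_pmf (\<lambda>b. if b then 1 else 0) (bernoulli_pmf p)
      else map_pmf (\<lambda>b. if b then 0 else 1) (bernoulli_pmf q))"

text \<open>Transition kernel of S_t given action a (True = transmit); channel success prob ps.\<close>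
definition kernel :: "real \<Rightarrow> real \<Rightarrow> real \<Rightarrow> st \<Rightarrow> bool \<Rightarrow> st pmf" where
  "kernel p q ps s a = (case s of (x, xh, d) \<Rightarrow>
      bind_pmf (src_step p q x) (\<lambda>x'.
      bind_pmf (bernoulli_pmf ps) (\<lambda>succ.
        let xh' = (if a \<and> succ then x' else xh)
        in return_pmf (x', xh', if x' \<noteq> xh' then d + 1 else 0))))"

definition switching_policy :: "nat \<Rightarrow> nat \<Rightarrow> st \<Rightarrow> bool" where
  "switching_policy dbar dlow s = (case s of (x, xh, d) \<Rightarrow>
      (x = 1 \<and> xh = 0 \<and> d \<ge> dbar) \<or> (x = 0 \<and> xh = 1 \<and> d \<ge> dlow)
      \<or> (dbar = 0 \<and> s = (0,0,0)) \<or> (dlow = 0 \<and> s = (1,1,0)))"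

definition state_cost :: "real \<Rightarrow> st \<Rightarrow> real" where
  "state_cost \<beta> s = (case s of (x, xh, d) \<Rightarrow>
      if x = 1 \<and> xh = 0 then \<beta> * real d
      else if x = 0 \<and> xh = 1 then (1 - \<beta>) * real d else 0)"

definition stage_cost :: "real \<Rightarrow> real \<Rightarrow> real \<Rightarrow> real \<Rightarrow> real \<Rightarrow> st \<Rightarrow> bool \<Rightarrow> real" where
  "stage_cost p q ps \<beta> lam s a =
     measure_pmf.expectation (kernel p q ps s a) (state_cost \<beta>) + lam * (if a then 1 else 0)"

text \<open>Distribution of S_{n+1} under a stationary deterministic policy pi, with S_1 = (0,0,0).\<close>
definition state_dist :: "real \<Rightarrow> real \<Rightarrow> real \<Rightarrow> (st \<Rightarrow> bool) \<Rightarrow> nat \<Rightarrow> st pmf" where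
  "state_dist p q ps \<pi> n =
     ((\<lambda>\<mu>. bind_pmf \<mu> (\<lambda>s. kernel p q ps s (\<pi> s))) ^^ n) (return_pmf (0,0,0))"

definition avg_cost :: "real \<Rightarrow> real \<Rightarrow> real \<Rightarrow> real \<Rightarrow> real \<Rightarrow> (st \<Rightarrow> bool) \<Rightarrow> ereal" where
  "avg_cost p q ps \<beta> lam \<pi> = limsup (\<lambda>T. ereal ((1 / real T) *
      (\<Sum>t = 1..T. measure_pmf.expectation (state_dist p q ps \<pi> (t - 1))
                     (\<lambda>s. stage_cost p q ps \<beta> lam s (\<pi> s)))))"

definition is_stationary :: "real \<Rightarrow> real \<Rightarrow> real \<Rightarrow> (st \<Rightarrow> bool) \<Rightarrow> st pmf \<Rightarrow> bool" where
  "is_stationary p q ps \<pi> \<mu> \<longleftrightarrow> set_pmf \<mu> \<subseteq> state_space \<and>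
     bind_pmf \<mu> (\<lambda>s. kernel p q ps s (\<pi> s)) = \<mu>"

definition psi :: "real \<Rightarrow> real \<Rightarrow> nat \<Rightarrow> real" where
  "psi pf x y = (1 - (x + (1 - x) * real y) * x ^ (y - 1)) / (1 - x)^2
      + (x * pf + (1 - x * pf) * real y) * x ^ (y - 1) / (1 - x * pf)^2"

end

theory Submission
  imports Defs
begin

text \<open>
  Under the policy the ladder (1,0,k) is entered only from (0,0,0) and the ladder (0,1,k) only
  from (1,1,0), and both are climbed one rung at a time, with probability qb (qb pf from dbar on)
  resp. pb pf. Hence every stationary distribution is geometric along the ladders with scale
  given by its masses at (0,0,0) and (1,1,0), and these two masses are pinned down by the total
  mass and the balance equation at (1,1,0).
  For the average cost we solve the Poisson equation explicitly: the bias is affine in the age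
  on each ladder (up to a bounded geometric correction below dbar), so the expected bias grows at
  most like the expected age, which stays bounded by a drift argument; telescoping then shows
  that the Cesaro averages of the expected stage cost converge to the gain.
\<close>

lemma expectation_bernoulli_pair:
  fixes f :: "'a \<Rightarrow> real"
  assumes "0 \<le> r" "r \<le> 1" "0 \<le> ps" "ps \<le> 1"
  shows "measure_pmf.expectation (bind_pmf (bernoulli_pmf r)
            (\<lambda>b. bind_pmf (bernoulli_pmf ps) (\<lambda>s. return_pmf (g b s)))) f
     = r * (ps * f (g True True) + (1-ps) * f (g True False))
       + (1-r) * (ps * f (g False True) + (1-ps) * f (g False False))"
proof -
  have inner: "measure_pmf.expectation (bind_pmf (bernoulli_pmf ps) (\<lambda>succ. return_pmf (h succ))) f
      = ps * f (h True) + (1-ps) * f (h False)" for h :: "bool \<Rightarrow> 'a"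
    by (subst pmf_expectation_bind[where A=UNIV]) (auto simp: UNIV_bool assms)
  show ?thesis
    by (subst pmf_expectation_bind[where A=UNIV]) (auto simp: UNIV_bool assms inner)
qed

lemma expectation_kernel:
  fixes f :: "st \<Rightarrow> real"
  assumes "0 \<le> p" "p \<le> 1" "0 \<le> q" "q \<le> 1" "0 \<le> ps" "ps \<le> 1"
  shows "measure_pmf.expectation (kernel p q ps (x,xh,d) a) f =
     (if x = 0 then p else 1 - q) *
        (ps * f (1, (if a then 1 else xh), if 1 \<noteq> (if a then 1 else xh) then d+1 else 0)
         + (1-ps) * f (1, xh, if 1 \<noteq> xh then d+1 else 0))
   + (if x = 0 then 1 - p else q) *
        (ps * f (0, (if a then 0 else xh), if 0 \<noteq> (if a then 0 else xh) then d+1 else 0)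
         + (1-ps) * f (0, xh, if 0 \<noteq> xh then d+1 else 0))"
proof (cases "x = 0")
  case True
  show ?thesis unfolding kernel_def src_step_def using True
    apply (simp only: bind_map_pmf Let_def if_True simp_thms split)
    apply (subst expectation_bernoulli_pair)
    using assms apply (simp_all (no_asm_simp))
    done
next
  case False
  show ?thesis unfolding kernel_def src_step_def using False
    apply (simp only: bind_map_pmf Let_def if_False simp_thms split)
    apply (subst expectation_bernoulli_pair)
    using assms apply (simp_all (no_asm_simp))
    done
qed

lemma set_pmf_kernel:
  "set_pmf (kernel p q ps (x,xh,d) a) \<subseteq>
    (\<lambda>(x', succ). (x', if a \<and> succ then x' else xh,
                    if x' \<noteq> (if a \<and> succ then x' else xh) then d+1 else 0)) ` ({0,1} \<times> UNIV)"
proof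
  fix t assume "t \<in> set_pmf (kernel p q ps (x,xh,d) a)"
  then obtain x' succ where x': "x' \<in> set_pmf (src_step p q x)"
    and t: "t = (x', if a \<and> succ then x' else xh, if x' \<noteq> (if a \<and> succ then x' else xh) then d+1 else 0)"
    unfolding kernel_def Let_def by auto
  have "x' \<in> {0,1}" using x' unfolding src_step_def by (auto split: if_splits)
  then show "t \<in> (\<lambda>(x', succ). (x', if a \<and> succ then x' else xh,
                    if x' \<noteq> (if a \<and> succ then x' else xh) then d+1 else 0)) ` ({0,1} \<times> UNIV)"
    unfolding t by (intro image_eqI[where x="(x',succ)"]) auto
qed

lemma finite_set_pmf_kernel: "finite (set_pmf (kernel p q ps s a))"
proof -
  obtain x xh d where s: "s = (x,xh,d)" by (cases s) auto
  show ?thesis unfolding s by (rule finite_subset[OF set_pmf_kernel]) auto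
qed

lemma expectation_cong_set_pmf:
  fixes f g :: "'a \<Rightarrow> real"
  assumes "set_pmf M \<subseteq> S" "\<And>s. s \<in> S \<Longrightarrow> f s = g s"
  shows "measure_pmf.expectation M f = measure_pmf.expectation M g"
  using assms by (intro integral_cong_AE) (auto simp: AE_measure_pmf_iff)

lemma expectation_indicator_combination:
  fixes a b c :: real
  shows "measure_pmf.expectation M (\<lambda>s. a * indicator A s + b * indicator B s + c * indicator C s)
     = a * measure_pmf.prob M A + b * measure_pmf.prob M B + c * measure_pmf.prob M C"
proof -
  have int: "integrable (measure_pmf M) (\<lambda>s. x * indicator Y s)" for x :: real and Y
    by (intro integrable_mult_right measure_pmf.integrable_const_bound[where B=1])
       (auto split: split_indicator)
  have "measure_pmf.expectation M (\<lambda>s. a * indicator A s + b * indicator B s + c * indicator C s)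
    = measure_pmf.expectation M (\<lambda>s. a * indicator A s + b * indicator B s)
      + measure_pmf.expectation M (\<lambda>s. c * indicator C s)"
    by (intro Bochner_Integration.integral_add Bochner_Integration.integrable_add int)
  also have "measure_pmf.expectation M (\<lambda>s. a * indicator A s + b * indicator B s)
    = measure_pmf.expectation M (\<lambda>s. a * indicator A s) + measure_pmf.expectation M (\<lambda>s. b * indicator B s)"
    by (intro Bochner_Integration.integral_add int)
  finally show ?thesis by simp
qed

lemma pmf_range_sums:
  assumes "inj h"
  shows "(\<lambda>k. pmf M (h k)) sums measure_pmf.prob M (range h)"
proof -
  have "(\<lambda>k. measure_pmf.prob M {h k}) sums measure_pmf.prob M (\<Union>k. {h k})"
    by (rule measure_UNION)
       (auto simp: disjoint_family_on_def assms inj_eq measure_pmf.emeasure_finite)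
  moreover have "(\<Union>k. {h k}) = range h" by auto
  ultimately show ?thesis by (simp add: measure_pmf_single)
qed

lemma nn_integral_indicator_range:
  fixes f :: "'a \<Rightarrow> real" and h :: "nat \<Rightarrow> 'a"
  assumes "inj h" "\<And>x. 0 \<le> f x" "summable (\<lambda>k. f (h k))"
  shows "(\<integral>\<^sup>+x. ennreal (f x) * indicator (range h) x \<partial>count_space UNIV) = ennreal (\<Sum>k. f (h k))"
proof -
  have "(\<integral>\<^sup>+x. ennreal (f x) * indicator (range h) x \<partial>count_space UNIV)
      = (\<integral>\<^sup>+x. ennreal (f x) \<partial>count_space (range h))"
    by (rule nn_integral_count_space_indicator[symmetric]) simp
  also have "\<dots> = (\<integral>\<^sup>+k. ennreal (f (h k)) \<partial>count_space UNIV)"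
    by (rule nn_integral_bij_count_space[symmetric]) (use assms(1) in \<open>simp add: bij_betw_def\<close>)
  also have "\<dots> = (\<Sum>k. ennreal (f (h k)))" by (rule nn_integral_count_space_nat)
  also have "\<dots> = ennreal (\<Sum>k. f (h k))" by (rule suminf_ennreal2) (use assms in auto)
  finally show ?thesis .
qed

locale switching_chain =
  fixes p q ps :: real and dbar :: nat
  assumes p_pos: "0 < p" and p_lt_1: "p < 1" and q_pos: "0 < q" and q_lt_1: "q < 1"
    and ps_pos: "0 < ps" and ps_le_1: "ps \<le> 1" and dbar_ge_1: "1 \<le> dbar"
begin

abbreviation "pf \<equiv> 1 - ps"
abbreviation "pb \<equiv> 1 - p"
abbreviation "qb \<equiv> 1 - q"
abbreviation "pol \<equiv> switching_policy dbar 0"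
abbreviation "K s \<equiv> kernel p q ps s (pol s)"

lemma probability_bounds:
  "0 < pb" "0 < qb" "0 \<le> pf" "pf < 1" "0 \<le> pb * pf" "0 \<le> qb * pf"
  "pb * pf < 1" "qb * pf < 1" "0 < 1 - pb * pf" "0 < 1 - qb * pf"
proof -
  have a: "pb * pf \<le> pb" using p_pos p_lt_1 ps_pos ps_le_1 by (simp add: mult_left_le)
  have b: "qb * pf \<le> qb" using q_pos q_lt_1 ps_pos ps_le_1 by (simp add: mult_left_le)
  show "0 < pb" "0 < qb" "0 \<le> pf" "pf < 1" "0 \<le> pb * pf" "0 \<le> qb * pf"
    using p_pos p_lt_1 q_pos q_lt_1 ps_pos ps_le_1 by auto
  show "pb * pf < 1" "qb * pf < 1" "0 < 1 - pb * pf" "0 < 1 - qb * pf"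
    using a b p_pos q_pos by auto
qed

lemma expectation_K:
  "measure_pmf.expectation (kernel p q ps (x,xh,d) a) f =
     (if x = 0 then p else 1 - q) *
        (ps * f (1, (if a then 1 else xh), if 1 \<noteq> (if a then 1 else xh) then d+1 else 0)
         + (1-ps) * f (1, xh, if 1 \<noteq> xh then d+1 else 0))
   + (if x = 0 then 1 - p else q) *
        (ps * f (0, (if a then 0 else xh), if 0 \<noteq> (if a then 0 else xh) then d+1 else 0)
         + (1-ps) * f (0, xh, if 0 \<noteq> xh then d+1 else 0))"
  by (rule expectation_kernel) (use p_pos p_lt_1 q_pos q_lt_1 ps_pos ps_le_1 in auto)

lemma expectation_K_000:
  "measure_pmf.expectation (K (0,0,0)) f = p * f (1,0,1) + pb * f (0,0,0)"
  using dbar_ge_1 by (simp add: expectation_K switching_policy_def algebra_simps)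

lemma expectation_K_110:
  "measure_pmf.expectation (K (1,1,0)) f = qb * f (1,1,0) + q * ps * f (0,0,0) + q * pf * f (0,1,1)"
  by (simp add: expectation_K switching_policy_def algebra_simps)

lemma expectation_K_10_below:
  "d < dbar \<Longrightarrow> measure_pmf.expectation (K (1,0,d)) f = qb * f (1,0,d+1) + q * f (0,0,0)"
  by (simp add: expectation_K switching_policy_def algebra_simps)

lemma expectation_K_10_above:
  "dbar \<le> d \<Longrightarrow> measure_pmf.expectation (K (1,0,d)) f
     = qb * (ps * f (1,1,0) + pf * f (1,0,d+1)) + q * f (0,0,0)"
  by (simp add: expectation_K switching_policy_def algebra_simps)

lemma expectation_K_01:
  "measure_pmf.expectation (K (0,1,d)) f = p * f (1,1,0) + pb * (ps * f (0,0,0) + pf * f (0,1,d+1))"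
  by (simp add: expectation_K switching_policy_def algebra_simps)

lemma state_space_cases:
  assumes "s \<in> state_space"
  obtains "s = (0,0,0)" | "s = (1,1,0)"
    | d where "s = (1,0,d)" "1 \<le> d" | d where "s = (0,1,d)" "1 \<le> d"
  using assms unfolding state_space_def by auto

lemma set_pmf_K: "s \<in> state_space \<Longrightarrow> set_pmf (K s) \<subseteq> state_space"
proof -
  assume "s \<in> state_space"
  then obtain x xh d where s: "s = (x,xh,d)" "s \<in> state_space" by (cases s) auto
  show ?thesis
    using set_pmf_kernel[of p q ps x xh d "pol s"] s(2) dbar_ge_1
    unfolding s(1) by (auto simp: state_space_def switching_policy_def split: if_splits)
qed

lemma set_pmf_bind_K:
  assumes "set_pmf \<mu> \<subseteq> state_space" shows "set_pmf (bind_pmf \<mu> K) \<subseteq> state_space"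
  using assms set_pmf_K by fastforce

definition step_op :: "(st \<Rightarrow> real) \<Rightarrow> st \<Rightarrow> real" where
  "step_op f s = (case s of (x,xh,d) \<Rightarrow>
     if x = 0 \<and> xh = 0 then p * f (1,0,1) + pb * f (0,0,0)
     else if x = 1 \<and> xh = 1 then qb * f (1,1,0) + q * ps * f (0,0,0) + q * pf * f (0,1,1)
     else if x = 1 \<and> xh = 0 then
       (if d < dbar then qb * f (1,0,d+1) + q * f (0,0,0)
        else qb * (ps * f (1,1,0) + pf * f (1,0,d+1)) + q * f (0,0,0))
     else p * f (1,1,0) + pb * (ps * f (0,0,0) + pf * f (0,1,d+1)))"

lemma expectation_K_eq_step_op:
  assumes "s \<in> state_space" shows "measure_pmf.expectation (K s) f = step_op f s"
  using assms
proof (cases rule: state_space_cases)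
  case (3 d)
  show ?thesis
  proof (cases "d < dbar")
    case True
    then show ?thesis unfolding 3 expectation_K_10_below[OF True] step_op_def by simp
  next
    case False
    then have "dbar \<le> d" by simp
    then show ?thesis unfolding 3 expectation_K_10_above[OF \<open>dbar \<le> d\<close>] step_op_def
      using False by simp
  qed
next
  case 1 show ?thesis unfolding 1 expectation_K_000 step_op_def by simp
next
  case 2 show ?thesis unfolding 2 expectation_K_110 step_op_def by simp
next
  case (4 d) show ?thesis unfolding 4 expectation_K_01 step_op_def by simp
qed

text \<open>
  The state space splits into the two synced states, the finite ladder (1,0,k) with k < dbar
  on which nothing is sent, and the two infinite ladders on which the policy transmits.
\<close>
definition "ladder_10_low = (\<lambda>k. (1::nat,0::nat,k)) ` {1..<dbar}"
definition "ladder_10_high = range (\<lambda>k. (1::nat,0::nat,k+dbar))"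
definition "ladder_01 = range (\<lambda>k. (0::nat,1::nat,Suc k))"

lemmas ladder_defs = ladder_10_low_def ladder_10_high_def ladder_01_def

lemma state_space_partition:
  "state_space = {(0,0,0)} \<union> {(1,1,0)} \<union> ladder_10_low \<union> ladder_10_high \<union> ladder_01"
proof (intro equalityI subsetI)
  fix s assume "s \<in> state_space"
  then show "s \<in> {(0,0,0)} \<union> {(1,1,0)} \<union> ladder_10_low \<union> ladder_10_high \<union> ladder_01"
  proof (cases rule: state_space_cases)
    case (3 d)
    show ?thesis
    proof (cases "d < dbar")
      case True then show ?thesis using 3 by (auto simp: ladder_10_low_def)
    next
      case False
      then have "s = (\<lambda>k. (1,0,k+dbar)) (d - dbar)" using 3 by simp
      then show ?thesis unfolding ladder_10_high_def by blast
    qed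
  next
    case (4 d)
    then have "s = (\<lambda>k. (0,1,Suc k)) (d - 1)" by simp
    then show ?thesis unfolding ladder_01_def by blast
  qed auto
next
  fix s assume "s \<in> {(0,0,0)} \<union> {(1,1,0)} \<union> ladder_10_low \<union> ladder_10_high \<union> ladder_01"
  then show "s \<in> state_space" using dbar_ge_1 by (auto simp: ladder_defs state_space_def)
qed

lemma ladders_disjoint:
  "(0,0,0) \<notin> ladder_10_low" "(1,1,0) \<notin> ladder_10_low" "(0,0,0) \<notin> ladder_10_high"
  "(1,1,0) \<notin> ladder_10_high" "(0,0,0) \<notin> ladder_01" "(1,1,0) \<notin> ladder_01"
  "x \<in> ladder_10_low \<Longrightarrow> x \<notin> ladder_10_high" "x \<in> ladder_10_low \<Longrightarrow> x \<notin> ladder_01"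
  "x \<in> ladder_10_high \<Longrightarrow> x \<notin> ladder_01"
  by (auto simp: ladder_defs)

lemma pmf_total_mass_ladders:
  assumes "set_pmf \<mu> \<subseteq> state_space"
  shows "1 = pmf \<mu> (0,0,0) + pmf \<mu> (1,1,0) + (\<Sum>k\<in>{1..<dbar}. pmf \<mu> (1,0,k))
     + (\<Sum>k. pmf \<mu> (1,0,k+dbar)) + (\<Sum>k. pmf \<mu> (0,1,Suc k))"
proof -
  have union: "X \<inter> Y = {} \<Longrightarrow>
      measure_pmf.prob \<mu> (X \<union> Y) = measure_pmf.prob \<mu> X + measure_pmf.prob \<mu> Y" for X Y
    by (rule measure_pmf.finite_measure_Union) auto
  have disj: "({(0,0,0)} :: st set) \<inter> {(1,1,0)} = {}"
    "({(0,0,0)} \<union> {(1,1,0)}) \<inter> ladder_10_low = {}"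
    "(({(0,0,0)} :: st set) \<union> {(1,1,0)} \<union> ladder_10_low) \<inter> ladder_10_high = {}"
    "(({(0,0,0)} :: st set) \<union> {(1,1,0)} \<union> ladder_10_low \<union> ladder_10_high) \<inter> ladder_01 = {}"
    by (auto simp: ladder_defs)
  have "measure_pmf.prob \<mu> state_space = 1"
    using assms by (subst measure_pmf.prob_eq_1) (auto simp: AE_measure_pmf_iff)
  also have "measure_pmf.prob \<mu> state_space
     = measure_pmf.prob \<mu> {(0,0,0)} + measure_pmf.prob \<mu> {(1,1,0)}
       + measure_pmf.prob \<mu> ladder_10_low + measure_pmf.prob \<mu> ladder_10_high
       + measure_pmf.prob \<mu> ladder_01"
    by (simp only: state_space_partition union disj)
  also have "measure_pmf.prob \<mu> ladder_10_low = (\<Sum>k\<in>{1..<dbar}. pmf \<mu> (1,0,k))"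
    unfolding ladder_10_low_def
    by (subst measure_measure_pmf_finite) (auto simp: sum.reindex inj_on_def)
  also have "measure_pmf.prob \<mu> ladder_10_high = (\<Sum>k. pmf \<mu> (1,0,k+dbar))"
    unfolding ladder_10_high_def by (rule sums_unique[OF pmf_range_sums]) (auto simp: inj_def)
  also have "measure_pmf.prob \<mu> ladder_01 = (\<Sum>k. pmf \<mu> (0,1,Suc k))"
    unfolding ladder_01_def by (rule sums_unique[OF pmf_range_sums]) (auto simp: inj_def)
  finally show ?thesis by (simp add: measure_pmf_single)
qed

lemma nn_integral_ladders:
  fixes f :: "st \<Rightarrow> real"
  assumes nonneg: "\<And>x. 0 \<le> f x" and outside: "\<And>s. s \<notin> state_space \<Longrightarrow> f s = 0"
    and summable_10: "summable (\<lambda>k. f (1,0,k+dbar))"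
    and summable_01: "summable (\<lambda>k. f (0,1,Suc k))"
  shows "(\<integral>\<^sup>+x. ennreal (f x) \<partial>count_space UNIV)
    = ennreal (f (0,0,0) + f (1,1,0) + (\<Sum>k\<in>{1..<dbar}. f (1,0,k))
               + (\<Sum>k. f (1,0,k+dbar)) + (\<Sum>k. f (0,1,Suc k)))"
proof -
  let ?F = "\<lambda>x. ennreal (f x)"
  let ?I = "\<lambda>X. (\<integral>\<^sup>+x. ?F x * indicator X x \<partial>count_space UNIV)"
  have split: "?F x = ?F x * indicator {(0,0,0)} x + ?F x * indicator {(1,1,0)} x
      + ?F x * indicator ladder_10_low x + ?F x * indicator ladder_10_high x
      + ?F x * indicator ladder_01 x" for x
  proof (cases "x \<in> state_space")
    case True
    then show ?thesis using state_space_partition ladders_disjoint by (auto simp: indicator_def)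
  qed (simp add: outside)
  have "(\<integral>\<^sup>+x. ?F x \<partial>count_space UNIV) = ?I {(0,0,0)} + ?I {(1,1,0)} + ?I ladder_10_low
      + ?I ladder_10_high + ?I ladder_01"
    by (subst split) (simp add: nn_integral_add)
  also have "?I ladder_10_low = ennreal (\<Sum>k\<in>{1..<dbar}. f (1,0,k))"
  proof -
    have "?I ladder_10_low = (\<Sum>x\<in>ladder_10_low. ?F x * emeasure (count_space UNIV) {x})"
      by (rule nn_integral_indicator_finite) (auto simp: ladder_10_low_def)
    also have "\<dots> = ennreal (\<Sum>x\<in>ladder_10_low. f x)" using nonneg by simp
    also have "(\<Sum>x\<in>ladder_10_low. f x) = (\<Sum>k\<in>{1..<dbar}. f (1,0,k))"
      unfolding ladder_10_low_def by (subst sum.reindex) (auto simp: inj_on_def)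
    finally show ?thesis .
  qed
  also have "?I ladder_10_high = ennreal (\<Sum>k. f (1,0,k+dbar))"
    unfolding ladder_10_high_def
    by (rule nn_integral_indicator_range) (use nonneg summable_10 in \<open>auto simp: inj_def\<close>)
  also have "?I ladder_01 = ennreal (\<Sum>k. f (0,1,Suc k))"
    unfolding ladder_01_def
    by (rule nn_integral_indicator_range) (use nonneg summable_01 in \<open>auto simp: inj_def\<close>)
  finally show ?thesis
    using nonneg suminf_nonneg[OF summable_10] suminf_nonneg[OF summable_01]
    by (simp add: sum_nonneg ennreal_plus[symmetric] add_nonneg_nonneg del: ennreal_plus)
qed

lemma pmf_bind_K_via_step_op:
  assumes "set_pmf \<mu> \<subseteq> state_space"
    and "\<And>s. s \<in> state_space \<Longrightarrow>
           step_op (indicator {t}) s = a * indicator A s + b * indicator B s + c * indicator C s"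
  shows "pmf (bind_pmf \<mu> K) t
    = a * measure_pmf.prob \<mu> A + b * measure_pmf.prob \<mu> B + c * measure_pmf.prob \<mu> C"
proof -
  have "pmf (bind_pmf \<mu> K) t = measure_pmf.expectation \<mu> (\<lambda>s. pmf (K s) t)" by (rule pmf_bind)
  also have "\<dots> = measure_pmf.expectation \<mu>
                    (\<lambda>s. a * indicator A s + b * indicator B s + c * indicator C s)"
  proof (rule expectation_cong_set_pmf[OF assms(1)])
    fix s assume "s \<in> state_space"
    then show "pmf (K s) t = a * indicator A s + b * indicator B s + c * indicator C s"
      using expectation_K_eq_step_op[of s "indicator {t}"] assms(2)
      by (simp add: measure_pmf_single del: integral_indicator)
  qed
  finally show ?thesis by (simp only: expectation_indicator_combination)
qed

lemma pmf_bind_K_101: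
  assumes "set_pmf \<mu> \<subseteq> state_space"
  shows "pmf (bind_pmf \<mu> K) (1,0,1) = p * pmf \<mu> (0,0,0)"
proof -
  have "pmf (bind_pmf \<mu> K) (1,0,1)
      = p * measure_pmf.prob \<mu> {(0,0,0)} + 0 * measure_pmf.prob \<mu> {} + 0 * measure_pmf.prob \<mu> {}"
    by (rule pmf_bind_K_via_step_op[OF assms])
       (auto simp: step_op_def indicator_def One_nat_def elim!: state_space_cases split: if_splits)
  then show ?thesis by (simp add: measure_pmf_single)
qed

lemma pmf_bind_K_10_Suc:
  assumes "set_pmf \<mu> \<subseteq> state_space" "1 \<le> k"
  shows "pmf (bind_pmf \<mu> K) (1,0,Suc k) = (if k < dbar then qb else qb * pf) * pmf \<mu> (1,0,k)"
proof -
  have "pmf (bind_pmf \<mu> K) (1,0,Suc k) = (if k < dbar then qb else qb * pf) * measure_pmf.prob \<mu> {(1,0,k)}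
      + 0 * measure_pmf.prob \<mu> {} + 0 * measure_pmf.prob \<mu> {}"
    by (rule pmf_bind_K_via_step_op[OF assms(1)])
       (use assms(2) in \<open>auto simp: step_op_def indicator_def One_nat_def
                          elim!: state_space_cases split: if_splits\<close>)
  then show ?thesis by (simp add: measure_pmf_single)
qed

lemma pmf_bind_K_011:
  assumes "set_pmf \<mu> \<subseteq> state_space"
  shows "pmf (bind_pmf \<mu> K) (0,1,1) = q * pf * pmf \<mu> (1,1,0)"
proof -
  have "pmf (bind_pmf \<mu> K) (0,1,1)
      = q * pf * measure_pmf.prob \<mu> {(1,1,0)} + 0 * measure_pmf.prob \<mu> {} + 0 * measure_pmf.prob \<mu> {}"
    by (rule pmf_bind_K_via_step_op[OF assms])
       (auto simp: step_op_def indicator_def One_nat_def elim!: state_space_cases split: if_splits)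
  then show ?thesis by (simp add: measure_pmf_single)
qed

lemma pmf_bind_K_01_Suc:
  assumes "set_pmf \<mu> \<subseteq> state_space" "1 \<le> k"
  shows "pmf (bind_pmf \<mu> K) (0,1,Suc k) = pb * pf * pmf \<mu> (0,1,k)"
proof -
  have "pmf (bind_pmf \<mu> K) (0,1,Suc k)
      = pb * pf * measure_pmf.prob \<mu> {(0,1,k)} + 0 * measure_pmf.prob \<mu> {} + 0 * measure_pmf.prob \<mu> {}"
    by (rule pmf_bind_K_via_step_op[OF assms(1)])
       (use assms(2) in \<open>auto simp: step_op_def indicator_def One_nat_def
                          elim!: state_space_cases split: if_splits\<close>)
  then show ?thesis by (simp add: measure_pmf_single)
qed

lemma pmf_bind_K_110:
  assumes "set_pmf \<mu> \<subseteq> state_space"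
  shows "pmf (bind_pmf \<mu> K) (1,1,0) = qb * pmf \<mu> (1,1,0)
    + qb * ps * measure_pmf.prob \<mu> ladder_10_high + p * measure_pmf.prob \<mu> ladder_01"
proof -
  have high: "(Suc 0,0,d) \<in> ladder_10_high \<longleftrightarrow> dbar \<le> d" for d
  proof
    assume "dbar \<le> d" then have "(1::nat,0::nat,d) = (\<lambda>k. (1,0,k+dbar)) (d - dbar)" by simp
    then show "(Suc 0,0,d) \<in> ladder_10_high" unfolding ladder_10_high_def by simp
  qed (auto simp: ladder_10_high_def)
  have ladder01: "(0,Suc 0,d) \<in> ladder_01 \<longleftrightarrow> 1 \<le> d" for d
  proof
    assume "1 \<le> d" then have "(0::nat,1::nat,d) = (\<lambda>k. (0,1,Suc k)) (d - 1)" by simp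
    then show "(0,Suc 0,d) \<in> ladder_01" unfolding ladder_01_def by simp
  qed (auto simp: ladder_01_def)
  have outside: "(0,0,0) \<notin> ladder_10_high" "(Suc 0,Suc 0,0) \<notin> ladder_10_high"
    "(0,Suc 0,d) \<notin> ladder_10_high" "(0,0,0) \<notin> ladder_01" "(Suc 0,Suc 0,0) \<notin> ladder_01"
    "(Suc 0,0,d) \<notin> ladder_01" for d
    by (auto simp: ladder_defs)
  have "pmf (bind_pmf \<mu> K) (1,1,0) = qb * measure_pmf.prob \<mu> {(1,1,0)}
      + qb * ps * measure_pmf.prob \<mu> ladder_10_high + p * measure_pmf.prob \<mu> ladder_01"
  proof (rule pmf_bind_K_via_step_op[OF assms])
    fix s assume "s \<in> state_space"
    then show "step_op (indicator {(1,1,0)}) s = qb * indicator {(1,1,0)} s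
        + qb * ps * indicator ladder_10_high s + p * indicator ladder_01 s"
      by (cases rule: state_space_cases)
         (auto simp: step_op_def high ladder01 outside indicator_def One_nat_def split: if_splits)
  qed
  then show ?thesis by (simp add: measure_pmf_single)
qed

definition "cA = p * qb ^ (dbar - 1) / (1 - qb * pf)"
definition "ca1 = p * (1 - qb ^ (dbar - 1)) / (1 - qb) + cA"
definition "cb1 = q * pf / (1 - pb * pf)"
definition "cB = q / (pb * (1 - pb * pf))"
definition "cD = (1 + ca1) * pb * cB + (1 + cb1) * qb * cA"
definition "nu000 = pb * cB / cD"
definition "nu110 = qb * cA / cD"

lemma constants_pos: "0 < cA" "0 \<le> ca1" "0 \<le> cb1" "0 < cB" "0 < cD" "0 < nu000" "0 < nu110"
proof -
  have X: "0 < qb ^ (dbar - 1)" "qb ^ (dbar - 1) \<le> 1"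
    using probability_bounds q_pos by (auto intro!: power_le_one)
  show A: "0 < cA" using probability_bounds p_pos X by (simp add: cA_def)
  show a1: "0 \<le> ca1" using probability_bounds p_pos X q_pos A by (simp add: ca1_def)
  show b1: "0 \<le> cb1" using probability_bounds q_pos by (simp add: cb1_def)
  show B: "0 < cB" using probability_bounds q_pos by (simp add: cB_def)
  show D: "0 < cD" unfolding cD_def using A a1 b1 B probability_bounds
    by (intro add_pos_nonneg) (auto intro!: mult_pos_pos mult_nonneg_nonneg)
  show "0 < nu000" "0 < nu110"
    using A B D probability_bounds by (simp_all add: nu000_def nu110_def)
qed

lemma pb_cB: "pb * cB = q / (1 - pb * pf)"
  using probability_bounds by (simp add: cB_def)

lemma q_minus_p_cb1: "q - p * cb1 = ps * (pb * cB)"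
  using probability_bounds by (simp add: pb_cB cb1_def field_simps)

lemma ca1_eq: "ca1 = p * (1 - qb ^ (dbar - 1)) / q + cA"
  by (simp add: ca1_def)

lemma nu_normalized: "(1 + ca1) * nu000 + (1 + cb1) * nu110 = 1"
proof -
  have "(1 + ca1) * nu000 + (1 + cb1) * nu110 = ((1 + ca1) * pb * cB + (1 + cb1) * qb * cA) / cD"
    by (simp add: nu000_def nu110_def add_divide_distrib)
  then show ?thesis using constants_pos by (simp add: cD_def)
qed

lemma nu_balance_110: "q * nu110 = qb * ps * cA * nu000 + p * cb1 * nu110"
proof -
  have "(q - p * cb1) * nu110 = qb * ps * cA * nu000"
    unfolding q_minus_p_cb1 nu000_def nu110_def by simp
  then show ?thesis by (simp add: algebra_simps)
qed

lemma synced_masses_unique: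
  assumes norm: "1 = (1 + ca1) * m0 + (1 + cb1) * m1"
    and bal: "q * m1 = qb * ps * cA * m0 + p * cb1 * m1"
  shows "m0 = nu000" "m1 = nu110"
proof -
  have "(q - p * cb1) * m1 = qb * ps * cA * m0" using bal by (simp add: algebra_simps)
  then have "ps * ((pb * cB) * m1) = ps * (qb * cA * m0)"
    unfolding q_minus_p_cb1 by (simp add: algebra_simps)
  then have m1: "pb * cB * m1 = qb * cA * m0" using ps_pos by simp
  have "pb * cB = pb * cB * ((1 + ca1) * m0 + (1 + cb1) * m1)" using norm by simp
  also have "\<dots> = (1 + ca1) * pb * cB * m0 + (1 + cb1) * (pb * cB * m1)" by (simp add: algebra_simps)
  also have "\<dots> = m0 * cD" unfolding m1 cD_def by (simp add: algebra_simps)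
  finally show m0: "m0 = nu000" using constants_pos by (simp add: nu000_def field_simps)
  have "pb * cB * m1 = pb * cB * nu110"
    unfolding m1 m0 nu000_def nu110_def by (simp add: algebra_simps)
  then show "m1 = nu110" using constants_pos probability_bounds by simp
qed

definition ladder_weight :: "nat \<Rightarrow> real" where
  "ladder_weight k = (if k \<le> dbar then qb ^ (k - 1) else qb ^ (dbar - 1) * (qb * pf) ^ (k - dbar))"

lemma ladder_weight_1: "ladder_weight 1 = 1"
  using dbar_ge_1 by (simp add: ladder_weight_def)

lemma ladder_weight_Suc:
  assumes "1 \<le> k" shows "ladder_weight (Suc k) = (if k < dbar then qb else qb * pf) * ladder_weight k"
proof -
  consider "k < dbar" | "k = dbar" | "dbar < k" by linarith
  then show ?thesis
  proof cases
    case 1 then show ?thesis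
      using assms by (simp add: ladder_weight_def power_Suc[symmetric] Suc_diff_le del: power_Suc)
  qed (simp_all add: ladder_weight_def Suc_diff_le algebra_simps)
qed

lemma ladder_weight_high: "ladder_weight (k + dbar) = qb ^ (dbar - 1) * (qb * pf) ^ k"
  by (cases k) (auto simp: ladder_weight_def)

lemma ladder_weight_nonneg: "0 \<le> ladder_weight k"
  using probability_bounds by (simp add: ladder_weight_def)

lemma sum_ladder_weight_low: "(\<Sum>k\<in>{1..<dbar}. ladder_weight k) = (1 - qb ^ (dbar - 1)) / q"
proof -
  have "(\<Sum>k\<in>{1..<Suc m}. ladder_weight k) = (1 - qb ^ m) / q" if "m < dbar" for m
    using that
  proof (induction m)
    case (Suc m)
    then have "(\<Sum>k\<in>{1..<Suc (Suc m)}. ladder_weight k) = (1 - qb ^ m) / q + qb ^ m"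
      by (simp add: ladder_weight_def)
    also have "\<dots> = (1 - qb ^ Suc m) / q" using q_pos by (simp add: field_simps)
    finally show ?case .
  qed simp
  from this[of "dbar - 1"] show ?thesis using dbar_ge_1 by simp
qed

lemma ladder_10_high_sums: "(\<lambda>k. p * ladder_weight (k + dbar) * m) sums (cA * m)"
proof -
  have "(\<lambda>k. (p * qb ^ (dbar - 1) * m) * (qb * pf) ^ k)
          sums ((p * qb ^ (dbar - 1) * m) * (1 / (1 - qb * pf)))"
    by (intro sums_mult geometric_sums) (use probability_bounds in auto)
  then show ?thesis by (simp add: ladder_weight_high cA_def algebra_simps)
qed

lemma ladder_01_sums: "(\<lambda>k. q * pf * (pb * pf) ^ k * m) sums (cb1 * m)"
proof -
  have "(\<lambda>k. (q * pf * m) * (pb * pf) ^ k) sums ((q * pf * m) * (1 / (1 - pb * pf)))"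
    by (intro sums_mult geometric_sums) (use probability_bounds in auto)
  then show ?thesis by (simp add: cb1_def algebra_simps)
qed

definition "has_ladder_form \<mu> m0 m1 \<longleftrightarrow>
  (\<forall>k\<ge>1. pmf \<mu> (1,0,k) = p * ladder_weight k * m0) \<and>
  (\<forall>k\<ge>1. pmf \<mu> (0,1,k) = q * pf * (pb * pf) ^ (k - 1) * m1)"

lemma ladder_form_of_stationary:
  assumes support: "set_pmf \<mu> \<subseteq> state_space" and stat: "bind_pmf \<mu> K = \<mu>"
  shows "has_ladder_form \<mu> (pmf \<mu> (0,0,0)) (pmf \<mu> (1,1,0))"
  unfolding has_ladder_form_def
proof (intro conjI allI impI)
  fix k :: nat assume "1 \<le> k"
  then show "pmf \<mu> (1,0,k) = p * ladder_weight k * pmf \<mu> (0,0,0)"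
  proof (induction k rule: nat_induct_at_least)
    case base
    show ?case using pmf_bind_K_101[OF support] ladder_weight_1 by (simp add: stat)
  next
    case (Suc k)
    show ?case
      using pmf_bind_K_10_Suc[OF support Suc(1)] Suc(2) ladder_weight_Suc[OF Suc(1)] by (simp add: stat)
  qed
next
  fix k :: nat assume "1 \<le> k"
  then show "pmf \<mu> (0,1,k) = q * pf * (pb * pf) ^ (k - 1) * pmf \<mu> (1,1,0)"
  proof (induction k rule: nat_induct_at_least)
    case base
    show ?case using pmf_bind_K_011[OF support] by (simp add: stat)
  next
    case (Suc k)
    have "(pb*pf)^(Suc k - 1) = (pb*pf) * (pb*pf)^(k-1)" using Suc(1) by (cases k) auto
    then show ?case
      using pmf_bind_K_01_Suc[OF support Suc(1)] Suc(2) by (simp add: stat ac_simps)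
  qed
qed

lemma ladder_form_masses:
  assumes "has_ladder_form \<mu> m0 m1"
  shows "measure_pmf.prob \<mu> ladder_10_high = cA * m0"
    and "measure_pmf.prob \<mu> ladder_01 = cb1 * m1"
    and "(\<lambda>k. pmf \<mu> (1,0,k+dbar)) sums (cA * m0)"
    and "(\<lambda>k. pmf \<mu> (0,1,Suc k)) sums (cb1 * m1)"
    and "(\<Sum>k\<in>{1..<dbar}. pmf \<mu> (1,0,k)) = p * m0 * (1 - qb ^ (dbar - 1)) / q"
proof -
  note form = assms[unfolded has_ladder_form_def]
  show high: "(\<lambda>k. pmf \<mu> (1,0,k+dbar)) sums (cA * m0)"
    using ladder_10_high_sums[of m0] form dbar_ge_1 by simp
  show low: "(\<lambda>k. pmf \<mu> (0,1,Suc k)) sums (cb1 * m1)"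
    using ladder_01_sums[of m1] form by simp
  show "measure_pmf.prob \<mu> ladder_10_high = cA * m0"
    unfolding ladder_10_high_def using pmf_range_sums[of "\<lambda>k. (1,0,k+dbar)" \<mu>] high
    by (auto simp: inj_def sums_unique2)
  show "measure_pmf.prob \<mu> ladder_01 = cb1 * m1"
    unfolding ladder_01_def using pmf_range_sums[of "\<lambda>k. (0,1,Suc k)" \<mu>] low
    by (auto simp: inj_def sums_unique2)
  have "(\<Sum>k\<in>{1..<dbar}. pmf \<mu> (1,0,k)) = (\<Sum>k\<in>{1..<dbar}. p * m0 * ladder_weight k)"
    using form by (intro sum.cong) auto
  also have "\<dots> = p * m0 * (\<Sum>k\<in>{1..<dbar}. ladder_weight k)" by (rule sum_distrib_left[symmetric])
  also have "\<dots> = p * m0 * (1 - qb ^ (dbar - 1)) / q" by (simp only: sum_ladder_weight_low) simp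
  finally show "(\<Sum>k\<in>{1..<dbar}. pmf \<mu> (1,0,k)) = p * m0 * (1 - qb ^ (dbar - 1)) / q" .
qed

definition nu :: "st \<Rightarrow> real" where
  "nu s = (case s of (x,xh,d) \<Rightarrow>
     if x = 0 \<and> xh = 0 \<and> d = 0 then nu000
     else if x = 1 \<and> xh = 1 \<and> d = 0 then nu110
     else if x = 1 \<and> xh = 0 \<and> 1 \<le> d then p * ladder_weight d * nu000
     else if x = 0 \<and> xh = 1 \<and> 1 \<le> d then q * pf * (pb * pf) ^ (d - 1) * nu110
     else 0)"

lemma nu_simps:
  "nu (0,0,0) = nu000" "nu (1,1,0) = nu110"
  "1 \<le> d \<Longrightarrow> nu (1,0,d) = p * ladder_weight d * nu000"
  "1 \<le> d \<Longrightarrow> nu (0,1,d) = q * pf * (pb * pf) ^ (d - 1) * nu110"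
  by (auto simp: nu_def)

lemmas nu_eqs = nu_simps nu_simps[unfolded One_nat_def]

lemma nu_outside: "s \<notin> state_space \<Longrightarrow> nu s = 0"
  by (cases s) (auto simp: nu_def state_space_def)

lemma nu_nonneg: "0 \<le> nu s"
  using constants_pos probability_bounds ladder_weight_nonneg p_pos q_pos
  by (auto simp: nu_def split: prod.splits)

lemma stationary_eq_nu:
  assumes support: "set_pmf \<mu> \<subseteq> state_space" and stat: "bind_pmf \<mu> K = \<mu>"
  shows "pmf \<mu> s = nu s"
proof -
  define m0 where "m0 = pmf \<mu> (0,0,0)"
  define m1 where "m1 = pmf \<mu> (1,1,0)"
  have form: "has_ladder_form \<mu> m0 m1"
    unfolding m0_def m1_def by (rule ladder_form_of_stationary[OF support stat])
  note masses = ladder_form_masses[OF form]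
  have "1 = m0 + m1 + p * m0 * (1 - qb ^ (dbar - 1)) / q + cA * m0 + cb1 * m1"
    using pmf_total_mass_ladders[OF support] masses(5) sums_unique[OF masses(3)]
      sums_unique[OF masses(4)]
    unfolding m0_def m1_def by linarith
  also have "\<dots> = (1 + ca1) * m0 + (1 + cb1) * m1" using q_pos by (simp add: ca1_eq field_simps)
  finally have norm: "1 = (1 + ca1) * m0 + (1 + cb1) * m1" .
  have "m1 = qb * m1 + qb * ps * (cA * m0) + p * (cb1 * m1)"
    using pmf_bind_K_110[OF support] unfolding stat masses(1,2) m1_def by simp
  then have "q * m1 = qb * ps * cA * m0 + p * cb1 * m1" by (simp add: algebra_simps)
  note synced = synced_masses_unique[OF norm this]
  show ?thesis
  proof (cases "s \<in> state_space")
    case True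
    then show ?thesis
      using form synced unfolding has_ladder_form_def m0_def m1_def
      by (cases rule: state_space_cases) (auto simp: nu_eqs)
  next
    case False
    then have "s \<notin> set_pmf \<mu>" using support by auto
    then show ?thesis using False nu_outside by (simp add: set_pmf_eq)
  qed
qed

lemma nu_total_mass: "(\<integral>\<^sup>+x. ennreal (nu x) \<partial>count_space UNIV) = 1"
proof -
  have high: "(\<lambda>k. nu (1,0,k+dbar)) sums (cA * nu000)"
    using ladder_10_high_sums[of nu000] dbar_ge_1 by (simp add: nu_eqs)
  have low: "(\<lambda>k. nu (0,1,Suc k)) sums (cb1 * nu110)"
    using ladder_01_sums[of nu110] by (simp add: nu_eqs)
  have fin: "(\<Sum>k\<in>{1..<dbar}. nu (1,0,k)) = p * nu000 * (1 - qb ^ (dbar - 1)) / q"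
  proof -
    have "(\<Sum>k\<in>{1..<dbar}. nu (1,0,k)) = (\<Sum>k\<in>{1..<dbar}. p * nu000 * ladder_weight k)"
      by (rule sum.cong) (auto simp: nu_eqs)
    also have "\<dots> = p * nu000 * (\<Sum>k\<in>{1..<dbar}. ladder_weight k)" by (rule sum_distrib_left[symmetric])
    also have "\<dots> = p * nu000 * (1 - qb ^ (dbar - 1)) / q" by (simp only: sum_ladder_weight_low) simp
    finally show ?thesis .
  qed
  have "(\<integral>\<^sup>+x. ennreal (nu x) \<partial>count_space UNIV)
      = ennreal (nu (0,0,0) + nu (1,1,0) + (\<Sum>k\<in>{1..<dbar}. nu (1,0,k))
                 + (\<Sum>k. nu (1,0,k+dbar)) + (\<Sum>k. nu (0,1,Suc k)))"
    by (rule nn_integral_ladders) (use nu_nonneg nu_outside high low in \<open>auto intro: sums_summable\<close>)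
  also have "nu (0,0,0) + nu (1,1,0) + (\<Sum>k\<in>{1..<dbar}. nu (1,0,k))
                 + (\<Sum>k. nu (1,0,k+dbar)) + (\<Sum>k. nu (0,1,Suc k))
      = nu000 + nu110 + p * nu000 * (1 - qb ^ (dbar - 1)) / q + cA * nu000 + cb1 * nu110"
    unfolding fin sums_unique[OF high, symmetric] sums_unique[OF low, symmetric] nu_simps ..
  also have "nu000 + nu110 + p * nu000 * (1 - qb ^ (dbar - 1)) / q + cA * nu000 + cb1 * nu110
      = (1 + ca1) * nu000 + (1 + cb1) * nu110"
    using q_pos by (simp add: ca1_eq field_simps)
  finally show ?thesis by (simp add: nu_normalized)
qed

definition "nu_pmf = embed_pmf nu"

lemma pmf_nu_pmf: "pmf nu_pmf s = nu s"
  unfolding nu_pmf_def by (rule pmf_embed_pmf) (use nu_nonneg nu_total_mass in auto)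

lemma set_pmf_nu_pmf: "set_pmf nu_pmf \<subseteq> state_space"
  using nu_outside by (auto simp: set_pmf_eq pmf_nu_pmf)

lemma nu_pmf_ladder_form: "has_ladder_form nu_pmf nu000 nu110"
  by (simp add: has_ladder_form_def pmf_nu_pmf nu_eqs)

lemma nu_pmf_balance_off_000:
  assumes "t \<noteq> (0,0,0)"
  shows "pmf (bind_pmf nu_pmf K) t = pmf nu_pmf t"
proof (cases "t \<in> state_space")
  case False
  have "t \<notin> set_pmf (bind_pmf nu_pmf K)" using set_pmf_bind_K[OF set_pmf_nu_pmf] False by auto
  then show ?thesis using False by (simp add: set_pmf_eq pmf_nu_pmf nu_outside)
next
  case True
  then show ?thesis
  proof (cases rule: state_space_cases)
    case 1 then show ?thesis using assms by simp
  next
    case 2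
    note masses = ladder_form_masses[OF nu_pmf_ladder_form]
    have "pmf (bind_pmf nu_pmf K) (1,1,0) = qb * nu110 + qb * ps * (cA * nu000) + p * (cb1 * nu110)"
      using pmf_bind_K_110[OF set_pmf_nu_pmf] unfolding masses(1,2) by (simp add: pmf_nu_pmf nu_eqs)
    also have "\<dots> = nu110" using nu_balance_110 by (simp add: algebra_simps)
    finally show ?thesis unfolding 2 by (simp add: pmf_nu_pmf nu_eqs)
  next
    case (3 d)
    show ?thesis
    proof (cases "d = 1")
      case True
      then show ?thesis
        using 3 pmf_bind_K_101[OF set_pmf_nu_pmf] ladder_weight_1 by (simp add: pmf_nu_pmf nu_eqs)
    next
      case False
      then obtain k where k: "d = Suc k" "1 \<le> k" using 3(2) by (cases d) auto
      then show ?thesis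
        using 3 pmf_bind_K_10_Suc[OF set_pmf_nu_pmf k(2)] ladder_weight_Suc[OF k(2)]
        by (simp add: pmf_nu_pmf nu_eqs)
    qed
  next
    case (4 d)
    show ?thesis
    proof (cases "d = 1")
      case True
      then show ?thesis using 4 pmf_bind_K_011[OF set_pmf_nu_pmf] by (simp add: pmf_nu_pmf nu_eqs)
    next
      case False
      then obtain k where k: "d = Suc k" "1 \<le> k" using 4(2) by (cases d) auto
      have "(pb*pf)^(Suc k - 1) = (pb*pf) * (pb*pf)^(k-1)" using k(2) by (cases k) auto
      then show ?thesis
        using 4 k pmf_bind_K_01_Suc[OF set_pmf_nu_pmf k(2)] by (simp add: pmf_nu_pmf nu_eqs ac_simps)
    qed
  qed
qed

text \<open>The balance at (0,0,0) follows from the others because both sides have total mass one.\<close>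
lemma nu_pmf_stationary: "bind_pmf nu_pmf K = nu_pmf"
proof (rule pmf_eqI)
  fix t
  show "pmf (bind_pmf nu_pmf K) t = pmf nu_pmf t"
  proof (cases "t = (0,0,0)")
    case True
    have "pmf (bind_pmf nu_pmf K) s = pmf nu_pmf s" if "s \<noteq> (0,0,0)" for s
      using nu_pmf_balance_off_000[OF that] .
    then show ?thesis
      unfolding True
      using pmf_total_mass_ladders[OF set_pmf_nu_pmf]
        pmf_total_mass_ladders[OF set_pmf_bind_K[OF set_pmf_nu_pmf]]
      by simp
  qed (rule nu_pmf_balance_off_000)
qed

lemma stationary_unique: "\<exists>!\<mu>. is_stationary p q ps pol \<mu>"
  unfolding is_stationary_def
proof (rule ex1I[of _ nu_pmf])
  show "set_pmf nu_pmf \<subseteq> state_space \<and> bind_pmf nu_pmf K = nu_pmf"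
    using set_pmf_nu_pmf nu_pmf_stationary by simp
next
  fix \<mu> assume "set_pmf \<mu> \<subseteq> state_space \<and> bind_pmf \<mu> K = \<mu>"
  then show "\<mu> = nu_pmf" by (intro pmf_eqI) (simp add: stationary_eq_nu pmf_nu_pmf)
qed

lemma stationary_pmf_explicit:
  assumes "is_stationary p q ps pol \<mu>"
  shows "pmf \<mu> (0,0,0) = nu000 \<and> pmf \<mu> (1,1,0) = nu110
    \<and> (\<forall>k. 1 \<le> k \<and> k \<le> dbar \<longrightarrow> pmf \<mu> (1,0,k) = p * qb ^ (k - 1) * nu000)
    \<and> (\<forall>k. k > dbar \<longrightarrow> pmf \<mu> (1,0,k) = p * qb ^ (dbar - 1) * (qb * pf) ^ (k - dbar) * nu000)
    \<and> (\<forall>k. k \<ge> 1 \<longrightarrow> pmf \<mu> (0,1,k) = q * pf * (pb * pf) ^ (k - 1) * nu110)"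
proof -
  have "pmf \<mu> s = nu s" for s
    using assms stationary_eq_nu by (simp add: is_stationary_def)
  then show ?thesis using dbar_ge_1 by (auto simp: nu_eqs ladder_weight_def mult.assoc)
qed

end

lemma gain_consistency:
  fixes p q pf ps be lam X dd E G A pbB bb aa cD psi g alA H alB gaB bz C :: real
  assumes q: "0 < q" and E: "E \<noteq> 0" and G: "G = 1 - (1-q)*pf" "G \<noteq> 0" and ps: "ps \<noteq> 0"
  and A: "A = p*X/G" and pbB: "pbB = q/E" and bb: "bb = q*pf/E" and aa: "aa = p*(1-X)/q + A"
  and cD: "cD = (1+aa)*pbB + (1+bb)*((1-q)*A)" "cD \<noteq> 0"
  and psi: "psi = (1 - ((1-q) + (1-(1-q))*dd)*X)/(1-(1-q))^2
                  + ((1-q)*pf + (1-(1-q)*pf)*dd)*X/(1-(1-q)*pf)^2"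
  and g: "g = be*p*psi*(pbB/cD) + (1-be)*q*pf*((1-q)*A/cD)/E^2
              + lam*(A*(pbB/cD) + (1+bb)*((1-q)*A/cD))"
  and alA: "alA = (1-be)/E" and H: "H = ((E + q*pf)*(lam-g) + q*pf*alA)/(q*ps)"
  and alB: "alB = be/G" and gaB: "gaB = (lam - g + (1-q)*pf*alB + (1-q)*ps*H)/G"
  and bz: "bz = ((1-q)*be/q - g)/q" and C: "C = alB*dd + gaB - be*dd/q - bz"
  shows "p*(be/q + bz + C*X) = g"
proof -
  \<comment> \<open>the left-hand side is affine in g, say c0 - k g, and c0 = (1 + k) g\<close>
  define c0 where "c0 = p * (be / q + ((1-q) * be / q) / q * (1 - X) + X * (be/G * dd - be * dd / q +
      (lam + (1-q) * pf * (be/G) + (1-q) * ((E + q*pf) * lam + q * pf * ((1-be)/E)) / q) / G))"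
  define k where "k = p * (1 - X) / q + p * X * (1 + (1-q) * (E + q * pf) / q) / G"
  have H': "(1-q)*ps*H = (1-q)*((E + q*pf)*(lam-g) + q*pf*((1-be)/E))/q"
    unfolding H alA using ps q by (simp add: field_simps)
  have e1: "be/q + bz + C*X = be/q + ((1-q)*be/q - g)/q*(1-X) + X*(be/G*dd - be*dd/q +
      (lam - g + (1-q) * pf * (be/G) + (1-q) * ((E + q*pf) * (lam - g) + q * pf * ((1-be)/E)) / q) / G)"
    unfolding C bz gaB H' alB using q by (simp add: field_simps)
  have lhs: "p*(be/q + bz + C*X) = c0 - k*g"
    unfolding e1 c0_def k_def using q E G(2) by (simp add: field_simps)
  have "1 + k = cD * E / q" unfolding k_def cD aa pbB bb A using q E G(2) by (simp add: field_simps)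
  have g_cD: "g * cD = be*p*psi*pbB + (1-be)*q*pf*((1-q)*A)/E^2 + lam*(A*pbB + (1+bb)*((1-q)*A))"
    unfolding g using cD(2) E by (simp add: field_simps)
  have c0_q_E: "c0 * (q/E) = be*p*psi*pbB + (1-be)*q*pf*((1-q)*A)/E^2 + lam*(A*pbB + (1+bb)*((1-q)*A))"
  proof -
    have "1 - (1-q) * pf = G" "1 - (1 - q) = q" using G by auto
    then show ?thesis unfolding c0_def psi A pbB bb using q E G(2)
      by (simp add: field_simps power2_eq_square)
  qed
  have "c0 * (q/E) = g * cD" unfolding g_cD c0_q_E ..
  then have "c0 * q = E * cD * g" using E by (simp add: field_simps)
  also have "E * cD = (1 + k) * q" using \<open>1 + k = cD * E / q\<close> q by (simp add: field_simps)
  finally have "c0 * q = (g * (1 + k)) * q" by (simp add: algebra_simps)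
  then have "c0 = g * (1 + k)" using q by simp
  then show ?thesis unfolding lhs by (simp add: algebra_simps)
qed

lemma poisson_identity_110:
  fixes E pb pf p ps q H lam g al :: real
  assumes "E = 1 - pb*pf" "pb = 1-p" "ps = 1-pf" "q*ps*H = (E+q*pf)*(lam-g) + q*pf*al" "E \<noteq> 0"
  shows "lam + (1-q)*H + q*pf*(al + (lam - g + pb*pf*al + p*H)/E) = g + H"
proof -
  have "E * (lam + (1-q)*H + q*pf*(al + (lam - g + pb*pf*al + p*H)/E)) = E * (g + H)"
    using assms(5) apply (simp add: field_simps)
    using assms(1-4) by algebra
  then show ?thesis using assms(5) by simp
qed

lemma poisson_identity_affine:
  fixes G r lam s H al ga g b x :: real
  assumes "G = 1 - r" "al = b/G" "ga = (lam - g + r*al + s*H)/G" "G \<noteq> 0"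
  shows "lam + s*H + r*(al*(x+1) + ga) = g + al*x + ga - b*x"
proof -
  have "G * (lam + s*H + r*(al*(x+1) + ga)) = G * (g + al*x + ga - b*x)"
    unfolding assms(3) assms(2) using assms(4) apply (simp add: field_simps)
    using assms(1) by algebra
  then show ?thesis using assms(4) by simp
qed

locale switching_cost = switching_chain +
  fixes be lam :: real
begin

definition "gain = be * p * psi pf qb dbar * nu000 + (1 - be) * q * pf * nu110 / (1 - pb * pf)^2
    + lam * (cA * nu000 + (1 + cb1) * nu110)"

text \<open>
  These coefficients
  are forced by the Poisson equation at all states other than (0,0,0); the equation there is the
  identity gain_consistency, which is where the formula for the gain enters.
\<close>
definition "al1 = (1 - be) / (1 - pb * pf)"
definition "H = ((1 - pb * pf + q * pf) * (lam - gain) + q * pf * al1) / (q * ps)"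
definition "ga1 = (lam - gain + pb * pf * al1 + p * H) / (1 - pb * pf)"
definition "al2 = be / (1 - qb * pf)"
definition "ga2 = (lam - gain + qb * pf * al2 + qb * ps * H) / (1 - qb * pf)"
definition "b0 = (qb * be / q - gain) / q"
definition "C = al2 * real dbar + ga2 - be * real dbar / q - b0"
definition "value_10_low d = be * real d / q + b0 + C * qb ^ (dbar - d)"

definition relative_value :: "st \<Rightarrow> real" where
  "relative_value s = (case s of (x,xh,d) \<Rightarrow>
     if x = 1 \<and> xh = 1 then H
     else if x = 1 \<and> xh = 0 then (if d < dbar then value_10_low d else al2 * real d + ga2)
     else if x = 0 \<and> xh = 1 then al1 * real d + ga1
     else 0)"

text \<open>The stage cost charges the cost of the next state, hence the shift by the current cost.\<close>
definition "bias s = relative_value s - state_cost be s"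

lemma p_value_10_low_1: "p * value_10_low 1 = gain"
proof -
  have "p * (be / q + b0 + C * qb ^ (dbar - 1)) = gain"
  proof (rule gain_consistency[where E="1 - pb*pf" and G="1 - qb*pf" and ps=ps and A=cA
        and pbB="pb*cB" and bb=cb1 and aa=ca1 and cD=cD and psi="psi pf qb dbar" and dd="real dbar"
        and lam=lam and alA=al1 and H=H and alB=al2 and gaB=ga2 and pf=pf and bz=b0 and C=C
        and X="qb ^ (dbar - 1)"])
    show "0 < q" by (rule q_pos)
    show "1 - pb*pf \<noteq> 0" "1 - qb*pf \<noteq> 0" "ps \<noteq> 0" using probability_bounds ps_pos by auto
    show "pb * cB = q / (1 - pb*pf)" by (rule pb_cB)
    show "cD = (1 + ca1) * (pb * cB) + (1 + cb1) * ((1 - q) * cA)" by (simp add: cD_def mult.assoc)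
    show "cD \<noteq> 0" using constants_pos by simp
    show "gain = be * p * psi pf qb dbar * (pb * cB / cD)
        + (1 - be) * q * pf * ((1 - q) * cA / cD) / (1 - pb*pf)\<^sup>2
        + lam * (cA * (pb * cB / cD) + (1 + cb1) * ((1 - q) * cA / cD))"
      by (simp add: gain_def nu000_def nu110_def)
  qed (simp_all add: cA_def cb1_def ca1_def psi_def al1_def H_def al2_def ga2_def b0_def C_def)
  then show ?thesis by (simp add: value_10_low_def)
qed

lemma poisson_coeffs_110: "lam + qb * H + q * pf * (al1 + ga1) = gain + H"
  unfolding ga1_def
  by (rule poisson_identity_110[where E="1 - pb*pf" and pb=pb and pf=pf and ps=ps])
     (use probability_bounds ps_pos q_pos in \<open>auto simp: H_def\<close>)

lemma poisson_coeffs_10_below: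
  "qb * (be * (real d + 1) / q + b0 + C * Y) = gain + be * real d / q + b0 + C * (qb * Y) - be * real d"
  using q_pos by (simp add: b0_def field_simps)

lemma value_10_low_dbar: "value_10_low dbar = al2 * real dbar + ga2"
  by (simp add: value_10_low_def C_def)

lemma relative_value_10_le_dbar: "d \<le> dbar \<Longrightarrow> relative_value (1,0,d) = value_10_low d"
  using value_10_low_dbar by (cases "d < dbar") (auto simp: relative_value_def)

lemma policy_values: "\<not> pol (0,0,0)" "pol (1,1,0)" "pol (1,0,d) = (dbar \<le> d)" "pol (0,1,d)"
  using dbar_ge_1 by (auto simp: switching_policy_def)

lemmas value_eqs = policy_values relative_value_def state_cost_def
  policy_values[unfolded One_nat_def]

lemma poisson_equation:
  assumes "s \<in> state_space"
  shows "stage_cost p q ps be lam s (pol s) + measure_pmf.expectation (K s) bias = gain + bias s"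
  using assms
proof (cases rule: state_space_cases)
  case 1
  have "stage_cost p q ps be lam s (pol s) + measure_pmf.expectation (K s) bias = p * relative_value (1,0,1)"
    unfolding 1 stage_cost_def expectation_K_000 bias_def by (simp add: value_eqs algebra_simps)
  also have "\<dots> = gain" using p_value_10_low_1 relative_value_10_le_dbar[of 1] dbar_ge_1 by simp
  finally show ?thesis unfolding 1 bias_def by (simp add: value_eqs)
next
  case 2
  have "stage_cost p q ps be lam s (pol s) + measure_pmf.expectation (K s) bias
      = lam + qb * H + q * pf * (al1 + ga1)"
    unfolding 2 stage_cost_def expectation_K_110 bias_def by (simp add: value_eqs algebra_simps)
  also have "\<dots> = gain + H" by (rule poisson_coeffs_110)
  finally show ?thesis unfolding 2 bias_def by (simp add: value_eqs)
next
  case (3 d)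
  show ?thesis
  proof (cases "d < dbar")
    case True
    have qb_pow: "qb ^ (dbar - d) = qb * qb ^ (dbar - Suc d)"
      using True by (simp add: Suc_diff_Suc[symmetric] del: Suc_diff_Suc)
    have "stage_cost p q ps be lam s (pol s) + measure_pmf.expectation (K s) bias
        = qb * relative_value (1,0,Suc d)"
      unfolding 3 stage_cost_def expectation_K_10_below[OF True] bias_def
      using True by (simp add: value_eqs algebra_simps)
    also have "\<dots> = qb * (be * (real d + 1) / q + b0 + C * qb ^ (dbar - Suc d))"
      using relative_value_10_le_dbar[of "Suc d"] True by (simp add: value_10_low_def)
    also have "\<dots> = gain + be * real d / q + b0 + C * (qb * qb ^ (dbar - Suc d)) - be * real d"
      by (rule poisson_coeffs_10_below)
    also have "\<dots> = gain + bias s"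
      unfolding 3 bias_def using True by (simp add: value_eqs value_10_low_def qb_pow)
    finally show ?thesis .
  next
    case False
    then have above: "dbar \<le> d" by simp
    have "stage_cost p q ps be lam s (pol s) + measure_pmf.expectation (K s) bias
        = lam + qb * ps * H + qb * pf * (al2 * (real d + 1) + ga2)"
      unfolding 3 stage_cost_def expectation_K_10_above[OF above] bias_def
      using above by (simp add: value_eqs algebra_simps)
    also have "\<dots> = gain + al2 * real d + ga2 - be * real d"
      by (rule poisson_identity_affine[where G="1 - qb*pf"])
         (use probability_bounds in \<open>auto simp: al2_def ga2_def\<close>)
    also have "\<dots> = gain + bias s" unfolding 3 bias_def using above by (simp add: value_eqs)
    finally show ?thesis .
  qed
next
  case (4 d)
  have "stage_cost p q ps be lam s (pol s) + measure_pmf.expectation (K s) bias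
      = lam + p * H + pb * pf * (al1 * (real d + 1) + ga1)"
    unfolding 4 stage_cost_def expectation_K_01 bias_def by (simp add: value_eqs algebra_simps)
  also have "\<dots> = gain + al1 * real d + ga1 - (1 - be) * real d"
    by (rule poisson_identity_affine[where G="1 - pb*pf"])
       (use probability_bounds in \<open>auto simp: al1_def ga1_def\<close>)
  also have "\<dots> = gain + bias s" unfolding 4 bias_def by (simp add: value_eqs)
  finally show ?thesis .
qed

abbreviation "sd n \<equiv> state_dist p q ps pol n"

lemma state_dist_0: "sd 0 = return_pmf (0,0,0)"
  by (simp add: state_dist_def)

lemma state_dist_Suc: "sd (Suc n) = bind_pmf (sd n) K"
  by (simp add: state_dist_def)

lemma set_pmf_state_dist: "set_pmf (sd n) \<subseteq> state_space"
proof (induction n)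
  case 0 then show ?case by (simp add: state_dist_0 state_space_def)
next
  case (Suc n) then show ?case unfolding state_dist_Suc by (rule set_pmf_bind_K)
qed

lemma finite_set_pmf_state_dist: "finite (set_pmf (sd n))"
  by (induction n) (simp_all add: state_dist_0 state_dist_Suc finite_set_pmf_kernel)

lemma integrable_state_dist: "integrable (measure_pmf (sd n)) (f :: st \<Rightarrow> real)"
  by (rule integrable_measure_pmf_finite[OF finite_set_pmf_state_dist])

lemma expectation_state_dist_Suc:
  fixes f :: "st \<Rightarrow> real"
  shows "measure_pmf.expectation (sd (Suc n)) f
       = measure_pmf.expectation (sd n) (\<lambda>s. measure_pmf.expectation (K s) f)"
proof -
  have "measure_pmf.expectation (sd (Suc n)) f
      = (\<Sum>a\<in>set_pmf (sd n). pmf (sd n) a *\<^sub>R measure_pmf.expectation (K a) f)"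
    unfolding state_dist_Suc
    by (rule pmf_expectation_bind) (use finite_set_pmf_state_dist finite_set_pmf_kernel in auto)
  also have "\<dots> = measure_pmf.expectation (sd n) (\<lambda>s. measure_pmf.expectation (K s) f)"
    by (rule integral_measure_pmf[symmetric]) (use finite_set_pmf_state_dist in \<open>auto simp: set_pmf_eq\<close>)
  finally show ?thesis .
qed

definition age :: "st \<Rightarrow> real" where "age s = real (snd (snd s))"

definition "rho = max qb pb"

lemma rho_bounds: "0 \<le> rho" "rho < 1" "qb \<le> rho" "pb \<le> rho"
  using probability_bounds p_pos q_pos by (auto simp: rho_def)

text \<open>Whatever the state, the age is either reset or grows by one, with growth probability \<le> rho.\<close>
lemma age_drift:
  assumes "s \<in> state_space"
  shows "measure_pmf.expectation (K s) age \<le> rho * age s + 1"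
  using assms
proof (cases rule: state_space_cases)
  case 1 show ?thesis unfolding 1 expectation_K_000 age_def using p_lt_1 p_pos rho_bounds by simp
next
  case 2
  have "q * pf \<le> 1" using q_lt_1 q_pos probability_bounds by (simp add: mult_le_one)
  then show ?thesis unfolding 2 expectation_K_110 age_def using rho_bounds by simp
next
  case (3 d)
  have grow: "qb * real d \<le> rho * real d" using rho_bounds by (intro mult_right_mono) auto
  show ?thesis
  proof (cases "d < dbar")
    case True
    have "qb * (real d + 1) \<le> rho * real d + 1" using grow q_pos by (simp add: algebra_simps)
    then show ?thesis unfolding 3 expectation_K_10_below[OF True] age_def by (simp add: algebra_simps)
  next
    case False
    then have "dbar \<le> d" by simp
    have "qb * (pf * (real d + 1)) \<le> qb * (real d + 1)"
      using probability_bounds by (intro mult_left_mono) auto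
    then have "qb * (pf * (real d + 1)) \<le> rho * real d + 1" using grow q_pos by (simp add: algebra_simps)
    then show ?thesis
      unfolding 3 expectation_K_10_above[OF \<open>dbar \<le> d\<close>] age_def by (simp add: add.commute)
  qed
next
  case (4 d)
  have "pb * real d \<le> rho * real d" using rho_bounds by (intro mult_right_mono) auto
  moreover have "pb * (pf * (real d + 1)) \<le> pb * (real d + 1)"
    using probability_bounds by (intro mult_left_mono) auto
  ultimately show ?thesis unfolding 4 expectation_K_01 age_def using p_pos by (simp add: algebra_simps)
qed

lemma expected_age_bounded: "measure_pmf.expectation (sd n) age \<le> 1 / (1 - rho)"
proof (induction n)
  case 0 then show ?case using rho_bounds by (simp add: state_dist_0 age_def)
next
  case (Suc n)
  have "measure_pmf.expectation (sd (Suc n)) age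
      = measure_pmf.expectation (sd n) (\<lambda>s. measure_pmf.expectation (K s) age)"
    by (rule expectation_state_dist_Suc)
  also have "\<dots> \<le> measure_pmf.expectation (sd n) (\<lambda>s. rho * age s + 1)"
    by (rule integral_mono_AE[OF integrable_state_dist integrable_state_dist], rule AE_pmfI,
        rule age_drift) (use set_pmf_state_dist in blast)
  also have "\<dots> = rho * measure_pmf.expectation (sd n) age + 1"
    using integrable_state_dist[of n age] by simp
  also have "\<dots> \<le> rho * (1 / (1 - rho)) + 1"
    using Suc rho_bounds by (intro add_right_mono mult_left_mono) auto
  also have "\<dots> = 1 / (1 - rho)" using rho_bounds by (simp add: field_simps)
  finally show ?case .
qed

lemma abs_affine_le:
  fixes a b d bias_const bias_slope :: real
  assumes "0 \<le> d" "\<bar>a\<bar> \<le> bias_slope" "\<bar>b\<bar> \<le> bias_const"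
  shows "\<bar>a * d + b\<bar> \<le> bias_const + bias_slope * d"
proof -
  have "\<bar>a * d + b\<bar> \<le> \<bar>a\<bar> * d + \<bar>b\<bar>"
    using abs_triangle_ineq[of "a * d" b] assms(1) by (simp add: abs_mult)
  moreover have "\<bar>a\<bar> * d \<le> bias_slope * d" using assms(1,2) by (rule mult_right_mono[rotated])
  ultimately show ?thesis using assms(3) by linarith
qed

definition "bias_const = \<bar>H\<bar> + \<bar>ga1\<bar> + \<bar>ga2\<bar> + \<bar>b0\<bar> + \<bar>C\<bar>"
definition "bias_slope = \<bar>al1 - (1 - be)\<bar> + \<bar>al2 - be\<bar> + \<bar>be / q - be\<bar>"

lemma bias_bound:
  assumes "s \<in> state_space"
  shows "\<bar>bias s\<bar> \<le> bias_const + bias_slope * age s"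
  using assms
proof (cases rule: state_space_cases)
  case 1 then show ?thesis by (simp add: bias_def value_eqs age_def bias_const_def)
next
  case 2 then show ?thesis by (simp add: bias_def value_eqs age_def bias_const_def)
next
  case (3 d)
  show ?thesis
  proof (cases "d < dbar")
    case True
    have "\<bar>C * qb ^ (dbar - d)\<bar> \<le> \<bar>C\<bar>"
      using probability_bounds q_pos by (simp add: abs_mult mult_left_le power_le_one)
    then have "\<bar>b0 + C * qb ^ (dbar - d)\<bar> \<le> bias_const" unfolding bias_const_def by linarith
    moreover have "bias s = (be / q - be) * real d + (b0 + C * qb ^ (dbar - d))"
      unfolding 3 bias_def using True by (simp add: value_eqs value_10_low_def algebra_simps)
    ultimately show ?thesis unfolding 3 age_def
      by (simp add: abs_affine_le bias_slope_def)
  next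
    case False
    have "bias s = (al2 - be) * real d + ga2"
      unfolding 3 bias_def using False by (simp add: value_eqs algebra_simps)
    then show ?thesis unfolding 3 age_def
      by (simp add: abs_affine_le bias_const_def bias_slope_def)
  qed
next
  case (4 d)
  have "bias s = (al1 - (1 - be)) * real d + ga1"
    unfolding 4 bias_def by (simp add: value_eqs algebra_simps)
  then show ?thesis unfolding 4 age_def by (simp add: abs_affine_le bias_const_def bias_slope_def)
qed

lemma expected_bias_bounded:
  "\<bar>measure_pmf.expectation (sd T) bias\<bar> \<le> bias_const + bias_slope / (1 - rho)"
proof -
  have "0 \<le> bias_slope" by (simp add: bias_slope_def)
  have "\<bar>measure_pmf.expectation (sd T) bias\<bar> \<le> measure_pmf.expectation (sd T) (\<lambda>s. \<bar>bias s\<bar>)"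
    using integral_norm_bound[of "measure_pmf (sd T)" bias] by simp
  also have "\<dots> \<le> measure_pmf.expectation (sd T) (\<lambda>s. bias_const + bias_slope * age s)"
    by (rule integral_mono_AE[OF integrable_state_dist integrable_state_dist], rule AE_pmfI,
        rule bias_bound) (use set_pmf_state_dist in blast)
  also have "\<dots> = bias_const + bias_slope * measure_pmf.expectation (sd T) age"
    using integrable_state_dist[of T age] by simp
  also have "\<dots> \<le> bias_const + bias_slope * (1 / (1 - rho))"
    using expected_age_bounded[of T] \<open>0 \<le> bias_slope\<close> by (intro add_left_mono mult_left_mono)
  finally show ?thesis by simp
qed

abbreviation "policy_stage_cost s \<equiv> stage_cost p q ps be lam s (pol s)"

lemma expected_stage_cost_telescoping:
  "(\<Sum>t = 1..T. measure_pmf.expectation (sd (t - 1)) policy_stage_cost)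
     = real T * gain - measure_pmf.expectation (sd T) bias"
proof (induction T)
  case 0 then show ?case by (simp add: state_dist_0 bias_def value_eqs)
next
  case (Suc T)
  have "measure_pmf.expectation (sd T) policy_stage_cost
      = measure_pmf.expectation (sd T) (\<lambda>s. gain + bias s - measure_pmf.expectation (K s) bias)"
    by (rule expectation_cong_set_pmf[OF set_pmf_state_dist]) (simp add: poisson_equation[symmetric])
  also have "\<dots> = gain + measure_pmf.expectation (sd T) bias - measure_pmf.expectation (sd (Suc T)) bias"
    using integrable_state_dist[of T bias] integrable_state_dist[of T "\<lambda>s. measure_pmf.expectation (K s) bias"]
    by (simp add: expectation_state_dist_Suc)
  finally show ?case using Suc.IH by (simp add: algebra_simps)
qed

lemma avg_cost_eq_gain: "avg_cost p q ps be lam pol = ereal gain"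
proof -
  define avg where
    "avg T = (1 / real T) * (\<Sum>t = 1..T. measure_pmf.expectation (sd (t - 1)) policy_stage_cost)" for T
  define e where "e T = measure_pmf.expectation (sd T) bias" for T
  have "eventually (\<lambda>T. gain - e T / real T = avg T) sequentially"
    using eventually_ge_at_top[of 1]
    by eventually_elim (unfold avg_def e_def expected_stage_cost_telescoping, simp add: field_simps)
  moreover have "(\<lambda>T. e T / real T) \<longlonglongrightarrow> 0"
  proof (rule Lim_null_comparison)
    show "eventually (\<lambda>T. norm (e T / real T) \<le> (bias_const + bias_slope / (1 - rho)) / real T) sequentially"
      using expected_bias_bounded
      by (intro always_eventually allI) (simp add: e_def divide_right_mono)
  qed (rule lim_const_over_n)
  then have "(\<lambda>T. gain - e T / real T) \<longlonglongrightarrow> gain" using tendsto_diff[OF tendsto_const] by force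
  ultimately have "avg \<longlonglongrightarrow> gain" by (rule Lim_transform_eventually[rotated])
  then have "limsup (\<lambda>T. ereal (avg T)) = ereal gain"
    by (intro lim_imp_Limsup) (auto intro: tendsto_ereal)
  then show ?thesis unfolding avg_cost_def avg_def .
qed

end

theorem lemma2:
  fixes p q ps \<beta> lam :: real and dbar :: nat
  assumes "0 < p" "p < 1" "0 < q" "q < 1" "0 < ps" "ps \<le> 1"
    and "0 \<le> \<beta>" "\<beta> \<le> 1" "0 \<le> lam" and "dbar \<ge> 1"
  defines "pf \<equiv> 1 - ps" and "pb \<equiv> 1 - p" and "qb \<equiv> 1 - q"
  defines "A \<equiv> p * qb ^ (dbar - 1) / (1 - qb * pf)"
  defines "a1 \<equiv> p * (1 - qb ^ (dbar - 1)) / (1 - qb) + A"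
  defines "b1 \<equiv> q * pf / (1 - pb * pf)"
  defines "B \<equiv> q / (pb * (1 - pb * pf))"
  defines "D \<equiv> (1 + a1) * pb * B + (1 + b1) * qb * A"
  defines "\<nu>000 \<equiv> pb * B / D" and "\<nu>110 \<equiv> qb * A / D"
  defines "\<pi> \<equiv> switching_policy dbar 0"
  shows "(\<exists>!\<mu>. is_stationary p q ps \<pi> \<mu>)
    \<and> (\<forall>\<mu>. is_stationary p q ps \<pi> \<mu> \<longrightarrow>
          pmf \<mu> (0,0,0) = \<nu>000 \<and> pmf \<mu> (1,1,0) = \<nu>110
        \<and> (\<forall>k. 1 \<le> k \<and> k \<le> dbar \<longrightarrow> pmf \<mu> (1,0,k) = p * qb ^ (k - 1) * \<nu>000)
        \<and> (\<forall>k. k > dbar \<longrightarrow> pmf \<mu> (1,0,k) = p * qb ^ (dbar - 1) * (qb * pf) ^ (k - dbar) * \<nu>000)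
        \<and> (\<forall>k. k \<ge> 1 \<longrightarrow> pmf \<mu> (0,1,k) = q * pf * (pb * pf) ^ (k - 1) * \<nu>110))
    \<and> avg_cost p q ps \<beta> lam \<pi> = ereal (\<beta> * p * psi pf qb dbar * \<nu>000
        + (1 - \<beta>) * q * pf * \<nu>110 / (1 - pb * pf)^2
        + lam * (A * \<nu>000 + (1 + b1) * \<nu>110))"
proof -
  interpret switching_cost p q ps dbar \<beta> lam
    by unfold_locales (use assms in auto)
  have A: "A = cA" by (simp add: A_def cA_def qb_def pf_def)
  have b1: "b1 = cb1" by (simp add: b1_def cb1_def pb_def pf_def)
  have D: "D = cD"
    by (simp add: D_def cD_def a1_def ca1_def A b1 B_def cB_def pb_def qb_def pf_def)
  have \<nu>: "\<nu>000 = nu000" "\<nu>110 = nu110"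
    by (simp_all add: \<nu>000_def \<nu>110_def nu000_def nu110_def B_def cB_def A D pb_def qb_def pf_def)
  show ?thesis
    unfolding A b1 \<nu> \<pi>_def pf_def pb_def qb_def
    using stationary_unique stationary_pmf_explicit avg_cost_eq_gain by (simp add: gain_def)
qed

end
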